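(* For every $d\ge1$, $\mathsf{sumPI}(\mathcal{A}^d)=2.5^d$.
   Context: $\mathcal{A}:\{0,1\}^4\to\{0,1\}$ is the function with $\mathcal{A}(x)=1$ iff $x\in\{0000,0001,0011,0111,1111,1110,1100,1000\}$, i.e. iff $x_1\le x_2\le x_3\le x_4$ or $x_1\ge x_2\ge x_3\ge x_4$. For $f:\{0,1\}^n\to\{0,1\}$, its $d$th iteration $f^d:\{0,1\}^{n^d}\to\{0,1\}$ is defined by $f^1=f$ and $f^{d+1}(x)=f\big(f^d(x_1,\dots,x_{n^d}),\ f^d(x_{n^d+1},\dots,x_{2n^d}),\ \dots,\ f^d(x_{(n-1)n^d+1},\dots,x_{n^{d+1}})\big)$. For $g:\{0,1\}^N\to\{0,1\}$, with $p=\{p_x\}$ ranging over families of probability distributions on $[N]$, $$\mathsf{sumPI}(g)=\min_{p}\ \max_{x,y:\ g(x)\neq g(y)} \frac{1}{\sum_{i:\,x_i\neq y_i}\sqrt{p_x(i)p_y(i)}}.$$ *)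

theory Defs
  imports "HOL-Analysis.Analysis"
begin

text \<open>Bit strings of length N are boolean lists of length N (False = 0, True = 1);
  coordinates are indexed 0..N-1.\<close>

definition bitstrings :: "nat \<Rightarrow> bool list set" where
  "bitstrings N = {x. length x = N}"

text \<open>The function A on 4 bits: A(x) = 1 iff x1 <= x2 <= x3 <= x4 or x1 >= x2 >= x3 >= x4.\<close>
definition funA :: "bool list \<Rightarrow> bool" where
  "funA x = (x \<in> {[False,False,False,False], [False,False,False,True], [False,False,True,True],
                  [False,True,True,True], [True,True,True,True], [True,True,True,False],
                  [True,True,False,False], [True,False,False,False]})"

text \<open>Iterated composition: iter n d f maps bit strings of length n^d to bool.
  iter n 0 f is the identity on one bit, so iter n 1 f = f on inputs of length n.\<close>
fun iter :: "nat \<Rightarrow> nat \<Rightarrow> (bool list \<Rightarrow> bool) \<Rightarrow> bool list \<Rightarrow> bool" where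
  "iter n 0 f x = hd x"
| "iter n (Suc d) f x =
     f (map (\<lambda>j. iter n d f (take (n ^ d) (drop (j * n ^ d) x))) [0..<n])"

definition prob_families :: "nat \<Rightarrow> (bool list \<Rightarrow> nat \<Rightarrow> real) set" where
  "prob_families N = {p. \<forall>x \<in> bitstrings N. (\<forall>i<N. p x i \<ge> 0) \<and> (\<Sum>i<N. p x i) = 1}"

definition pair_weight :: "nat \<Rightarrow> (bool list \<Rightarrow> nat \<Rightarrow> real) \<Rightarrow> bool list \<Rightarrow> bool list \<Rightarrow> real" where
  "pair_weight N p x y = (\<Sum>i \<in> {i. i < N \<and> x ! i \<noteq> y ! i}. sqrt (p x i * p y i))"

definition inv_weight :: "real \<Rightarrow> ereal" where
  "inv_weight w = (if w = 0 then \<infinity> else ereal (1 / w))"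

definition sumPI_obj :: "nat \<Rightarrow> (bool list \<Rightarrow> bool) \<Rightarrow> (bool list \<Rightarrow> nat \<Rightarrow> real) \<Rightarrow> ereal" where
  "sumPI_obj N g p = (SUP xy \<in> {(x, y). x \<in> bitstrings N \<and> y \<in> bitstrings N \<and> g x \<noteq> g y}.
                        inv_weight (pair_weight N p (fst xy) (snd xy)))"

text \<open>sumPI of g : {0,1}^N -> {0,1}; the min over p is rendered as an infimum.\<close>
definition sumPI :: "nat \<Rightarrow> (bool list \<Rightarrow> bool) \<Rightarrow> ereal" where
  "sumPI N g = (INF p \<in> prob_families N. sumPI_obj N g p)"

end

theory Submission
  imports Defs
begin

(* Both bounds are witnessed by objects that multiply under block composition.
   Upper bound: weights p whose pair weight is at least a on every pair separated by f give
   sumPI f <= 1/a; for a composed function take the product of the outer weight at the vector z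
   of block values and the inner weight at the block, so that pair weights multiply.
   Lower bound: a symmetric stochastic matrix G supported on separated pairs, together with
   positive vectors u_i with sum over {y. x_i <> y_i} of G x y * u_i y <= c * u_i x, forces for
   every p a separated pair of weight at most c: average the pair weights under G and apply AM-GM
   with the ratio u_i y / u_i x.  For a composition the outer matrix acts on the block values,
   while each block moves by the inner matrix if its value has to change and stays put otherwise;
   the constants multiply.  For A both objects are explicit with a = c = 2/5. *)

section \<open>Bit strings and blocks\<close>

lemma finite_bitstrings: "finite (bitstrings N)"
  using finite_lists_length_eq[of "UNIV :: bool set" N] by (simp add: bitstrings_def)

lemma bitstrings_0: "bitstrings 0 = {[]}"
  by (auto simp: bitstrings_def)

lemma sum_bitstrings_append:
  "(\<Sum>y\<in>bitstrings (N + M). F y) = (\<Sum>a\<in>bitstrings N. \<Sum>b\<in>bitstrings M. F (a @ b))"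
proof -
  have "bitstrings (N + M) = (\<lambda>(a, b). a @ b) ` (bitstrings N \<times> bitstrings M)"
  proof (intro equalityI subsetI)
    fix y assume "y \<in> bitstrings (N + M)"
    then show "y \<in> (\<lambda>(a, b). a @ b) ` (bitstrings N \<times> bitstrings M)"
      by (intro image_eqI[where x = "(take N y, drop N y)"]) (auto simp: bitstrings_def)
  qed (auto simp: bitstrings_def)
  moreover have "inj_on (\<lambda>(a, b). a @ b) (bitstrings N \<times> bitstrings M)"
    by (auto simp: inj_on_def bitstrings_def)
  ultimately show ?thesis
    by (simp add: sum.reindex sum.cartesian_product case_prod_unfold)
qed

lemma sum_bitstrings_Suc:
  "(\<Sum>w\<in>bitstrings (Suc n). F w) = (\<Sum>v\<in>UNIV. \<Sum>w\<in>bitstrings n. F (v # w))"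
proof -
  have "bitstrings (Suc n) = (\<lambda>(v, w). v # w) ` (UNIV \<times> bitstrings n)"
    by (auto simp: bitstrings_def length_Suc_conv)
  moreover have "inj_on (\<lambda>(v, w). v # w) (UNIV \<times> bitstrings n)"
    by (auto simp: inj_on_def)
  ultimately show ?thesis
    by (simp add: sum.reindex sum.cartesian_product case_prod_unfold)
qed

lemma sum_lessThan_mult:
  fixes F :: "nat \<Rightarrow> 'a::comm_monoid_add"
  shows "(\<Sum>i<n * N. F i) = (\<Sum>j<n. \<Sum>i<N. F (j * N + i))"
  by (simp add: sum.nat_group[symmetric] sum.shift_bounds_nat_ivl[of F 0 "_ * N" N, simplified]
      atLeast0LessThan add.commute)

lemma pair_weight_eq:
  "pair_weight N p x y = (\<Sum>i<N. if x ! i \<noteq> y ! i then sqrt (p x i * p y i) else 0)"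
proof -
  have "{i. i < N \<and> x ! i \<noteq> y ! i} = {i \<in> {..<N}. x ! i \<noteq> y ! i}"
    by auto
  then show ?thesis
    unfolding pair_weight_def by (simp only: sum.inter_filter[OF finite_lessThan])
qed

lemma pair_weight_nonneg:
  assumes "p \<in> prob_families N" "x \<in> bitstrings N" "y \<in> bitstrings N"
  shows "0 \<le> pair_weight N p x y"
  unfolding pair_weight_def by (intro sum_nonneg) (use assms in \<open>auto simp: prob_families_def\<close>)

definition block :: "nat \<Rightarrow> nat \<Rightarrow> bool list \<Rightarrow> bool list" where
  "block N j x = take N (drop (j * N) x)"

definition block_values :: "nat \<Rightarrow> nat \<Rightarrow> (bool list \<Rightarrow> bool) \<Rightarrow> bool list \<Rightarrow> bool list" where
  "block_values n N g x = map (\<lambda>j. g (block N j x)) [0..<n]"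

definition compose ::
  "nat \<Rightarrow> nat \<Rightarrow> (bool list \<Rightarrow> bool) \<Rightarrow> (bool list \<Rightarrow> bool) \<Rightarrow> bool list \<Rightarrow> bool" where
  "compose n N f g x = f (block_values n N g x)"

lemma iter_Suc_eq_compose: "iter n (Suc d) f = compose n (n ^ d) f (iter n d f)"
  by (simp add: fun_eq_iff compose_def block_values_def block_def)

lemma block_values_in_bitstrings: "block_values n N g x \<in> bitstrings n"
  by (simp add: block_values_def bitstrings_def)

lemma nth_block_values: "j < n \<Longrightarrow> block_values n N g x ! j = g (block N j x)"
  by (simp add: block_values_def)

lemma block_in_bitstrings: "x \<in> bitstrings (n * N) \<Longrightarrow> j < n \<Longrightarrow> block N j x \<in> bitstrings N"
  using mult_le_mono1[of "Suc j" n N] by (simp add: bitstrings_def block_def)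

lemma nth_block:
  "x \<in> bitstrings (n * N) \<Longrightarrow> j < n \<Longrightarrow> i < N \<Longrightarrow> block N j x ! i = x ! (j * N + i)"
  using mult_le_mono1[of "Suc j" n N] by (simp add: bitstrings_def block_def)

lemma block_0_append: "a \<in> bitstrings N \<Longrightarrow> block N 0 (a @ b) = a"
  by (simp add: block_def bitstrings_def)

lemma block_Suc_append: "a \<in> bitstrings N \<Longrightarrow> block N (Suc k) (a @ b) = block N k b"
  by (simp add: block_def bitstrings_def add.commute)

lemma sum_bitstrings_blocks:
  fixes H :: "bool list \<Rightarrow> 'a::comm_semiring_1"
  shows "(\<Sum>y\<in>bitstrings (n * N). H (block_values n N g y) * (\<Prod>k<n. K k (block N k y)))
    = (\<Sum>w\<in>bitstrings n. H w * (\<Prod>k<n. \<Sum>b | b \<in> bitstrings N \<and> g b = w ! k. K k b))"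
proof (induction n arbitrary: H K)
  case 0
  then show ?case
    by (simp add: bitstrings_0 block_values_def)
next
  case (Suc n)
  define S where "S k v = (\<Sum>b | b \<in> bitstrings N \<and> g b = v. K k b)" for k v
  define R where "R v = (\<Sum>w\<in>bitstrings n. H (v # w) * (\<Prod>k<n. S (Suc k) (w ! k)))" for v
  have values_append: "block_values (Suc n) N g (a @ b) = g a # block_values n N g b"
    if "a \<in> bitstrings N" for a b
    using that by (simp add: block_values_def map_upt_Suc block_0_append block_Suc_append del: upt_Suc)
  have "(\<Sum>y\<in>bitstrings (Suc n * N). H (block_values (Suc n) N g y) * (\<Prod>k<Suc n. K k (block N k y)))
      = (\<Sum>a\<in>bitstrings N. K 0 a * (\<Sum>b\<in>bitstrings (n * N).
          H (g a # block_values n N g b) * (\<Prod>k<n. K (Suc k) (block N k b))))"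
    by (simp add: sum_bitstrings_append prod.lessThan_Suc_shift values_append block_0_append
        block_Suc_append sum_distrib_left ac_simps del: prod.lessThan_Suc)
  also have "\<dots> = (\<Sum>a\<in>bitstrings N. K 0 a * R (g a))"
    using Suc.IH[of "\<lambda>w. H (g _ # w)" "\<lambda>k. K (Suc k)"] by (simp add: R_def S_def)
  also have "\<dots> = (\<Sum>v\<in>UNIV. \<Sum>a | a \<in> bitstrings N \<and> g a = v. K 0 a * R (g a))"
    by (rule sum.group[symmetric]) (auto simp: finite_bitstrings)
  also have "\<dots> = (\<Sum>v\<in>UNIV. S 0 v * R v)"
    by (simp add: S_def sum_distrib_right)
  also have "\<dots> = (\<Sum>w\<in>bitstrings (Suc n). H w * (\<Prod>k<Suc n. S k (w ! k)))"
    by (simp add: R_def sum_bitstrings_Suc prod.lessThan_Suc_shift sum_distrib_left ac_simps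
        del: prod.lessThan_Suc)
  finally show ?case
    by (simp add: S_def)
qed

section \<open>Weight schemes\<close>

definition separating_weights ::
  "nat \<Rightarrow> (bool list \<Rightarrow> bool) \<Rightarrow> (bool list \<Rightarrow> nat \<Rightarrow> real) \<Rightarrow> real \<Rightarrow> bool" where
  "separating_weights N g p a \<longleftrightarrow> p \<in> prob_families N \<and>
     (\<forall>x\<in>bitstrings N. \<forall>y\<in>bitstrings N. g x \<noteq> g y \<longrightarrow> a \<le> pair_weight N p x y)"

lemma sumPI_le_inverse:
  assumes "separating_weights N g p a" and "0 < a"
  shows "sumPI N g \<le> ereal (1 / a)"
proof -
  have "sumPI N g \<le> sumPI_obj N g p"
    using assms(1) unfolding sumPI_def separating_weights_def by (blast intro: INF_lower)
  also have "\<dots> \<le> ereal (1 / a)"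
    unfolding sumPI_obj_def
  proof (rule SUP_least, clarify)
    fix x y assume "x \<in> bitstrings N" "y \<in> bitstrings N" "g x \<noteq> g y"
    then have "a \<le> pair_weight N p x y"
      using assms(1) by (simp add: separating_weights_def)
    with \<open>0 < a\<close> show "inv_weight (pair_weight N p (fst (x, y)) (snd (x, y))) \<le> ereal (1 / a)"
      by (simp add: inv_weight_def frac_le)
  qed
  finally show ?thesis .
qed

definition compose_weights :: "nat \<Rightarrow> nat \<Rightarrow> (bool list \<Rightarrow> bool) \<Rightarrow>
    (bool list \<Rightarrow> nat \<Rightarrow> real) \<Rightarrow> (bool list \<Rightarrow> nat \<Rightarrow> real) \<Rightarrow> bool list \<Rightarrow> nat \<Rightarrow> real" where
  "compose_weights n N g pf pg x i =
     pf (block_values n N g x) (i div N) * pg (block N (i div N) x) (i mod N)"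

lemma compose_weights_block:
  "i < N \<Longrightarrow> compose_weights n N g pf pg x (j * N + i) = pf (block_values n N g x) j * pg (block N j x) i"
  by (simp add: compose_weights_def)

lemma compose_weights_in_prob_families:
  assumes "0 < N" and pf: "pf \<in> prob_families n" and pg: "pg \<in> prob_families N"
  shows "compose_weights n N g pf pg \<in> prob_families (n * N)"
  unfolding prob_families_def
proof (intro CollectI ballI conjI allI impI)
  fix x i assume x: "x \<in> bitstrings (n * N)" and "i < n * N"
  then have "i div N < n"
    by (simp add: less_mult_imp_div_less)
  with x pf pg \<open>0 < N\<close> show "0 \<le> compose_weights n N g pf pg x i"
    unfolding compose_weights_def prob_families_def
    by (simp add: block_values_in_bitstrings block_in_bitstrings)
next
  fix x assume x: "x \<in> bitstrings (n * N)"
  have "(\<Sum>i<n * N. compose_weights n N g pf pg x i)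
      = (\<Sum>j<n. pf (block_values n N g x) j * (\<Sum>i<N. pg (block N j x) i))"
    by (simp add: sum_lessThan_mult compose_weights_block sum_distrib_left)
  also have "\<dots> = 1"
    using pf pg x by (simp add: prob_families_def block_values_in_bitstrings block_in_bitstrings)
  finally show "(\<Sum>i<n * N. compose_weights n N g pf pg x i) = 1" .
qed

lemma pair_weight_compose_weights:
  assumes x: "x \<in> bitstrings (n * N)" and y: "y \<in> bitstrings (n * N)"
  shows "pair_weight (n * N) (compose_weights n N g pf pg) x y
    = (\<Sum>j<n. sqrt (pf (block_values n N g x) j * pf (block_values n N g y) j)
              * pair_weight N pg (block N j x) (block N j y))"
  unfolding pair_weight_eq sum_lessThan_mult sum_distrib_left
proof (intro sum.cong refl)
  fix j i assume "j \<in> {..<n}" "i \<in> {..<N}"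
  then show "(if x ! (j * N + i) \<noteq> y ! (j * N + i) then sqrt (compose_weights n N g pf pg x (j * N + i)
          * compose_weights n N g pf pg y (j * N + i)) else 0)
      = sqrt (pf (block_values n N g x) j * pf (block_values n N g y) j)
        * (if block N j x ! i \<noteq> block N j y ! i then sqrt (pg (block N j x) i * pg (block N j y) i) else 0)"
    using x y by (simp add: nth_block compose_weights_block real_sqrt_mult)
qed

lemma separating_weights_compose:
  assumes f: "separating_weights n f pf a" and g: "separating_weights N g pg b"
    and "0 < N" and "0 \<le> b"
  shows "separating_weights (n * N) (compose n N f g) (compose_weights n N g pf pg) (a * b)"
  unfolding separating_weights_def
proof (intro conjI ballI impI)
  show "compose_weights n N g pf pg \<in> prob_families (n * N)"
    using f g \<open>0 < N\<close> by (simp add: separating_weights_def compose_weights_in_prob_families)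
next
  fix x y assume x: "x \<in> bitstrings (n * N)" and y: "y \<in> bitstrings (n * N)"
    and "compose n N f g x \<noteq> compose n N f g y"
  define zx zy where "zx = block_values n N g x" and "zy = block_values n N g y"
  have "a \<le> pair_weight n pf zx zy"
    using f \<open>compose n N f g x \<noteq> _\<close>
    by (simp add: separating_weights_def zx_def zy_def compose_def block_values_in_bitstrings)
  then have "a * b \<le> b * pair_weight n pf zx zy"
    using \<open>0 \<le> b\<close> by (metis mult.commute mult_right_mono)
  also have "\<dots> = (\<Sum>j<n. if zx ! j \<noteq> zy ! j then sqrt (pf zx j * pf zy j) * b else 0)"
    unfolding pair_weight_eq sum_distrib_left by (intro sum.cong) auto
  also have "\<dots> \<le> (\<Sum>j<n. sqrt (pf zx j * pf zy j) * pair_weight N pg (block N j x) (block N j y))"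
  proof (intro sum_mono)
    fix j assume "j \<in> {..<n}"
    then have blocks: "block N j x \<in> bitstrings N" "block N j y \<in> bitstrings N"
      using x y by (simp_all add: block_in_bitstrings)
    have "0 \<le> sqrt (pf zx j * pf zy j)"
      using f \<open>j \<in> {..<n}\<close>
      by (simp add: separating_weights_def prob_families_def zx_def zy_def block_values_in_bitstrings)
    moreover have "zx ! j \<noteq> zy ! j \<Longrightarrow> b \<le> pair_weight N pg (block N j x) (block N j y)"
      using g blocks \<open>j \<in> {..<n}\<close> by (simp add: separating_weights_def zx_def zy_def nth_block_values)
    moreover have "0 \<le> pair_weight N pg (block N j x) (block N j y)"
      using g blocks by (simp add: separating_weights_def pair_weight_nonneg)
    ultimately show "(if zx ! j \<noteq> zy ! j then sqrt (pf zx j * pf zy j) * b else 0)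
        \<le> sqrt (pf zx j * pf zy j) * pair_weight N pg (block N j x) (block N j y)"
      by (simp add: mult_left_mono)
  qed
  also have "\<dots> = pair_weight (n * N) (compose_weights n N g pf pg) x y"
    using x y by (simp add: pair_weight_compose_weights zx_def zy_def)
  finally show "a * b \<le> pair_weight (n * N) (compose_weights n N g pf pg) x y" .
qed

section \<open>Adversary certificates\<close>

lemma stochastic_average_le_imp_ex:
  fixes G w :: "'a \<Rightarrow> 'a \<Rightarrow> real" and c :: real
  assumes "finite S" "x0 \<in> S"
    and nonneg: "\<And>x y. x \<in> S \<Longrightarrow> y \<in> S \<Longrightarrow> 0 \<le> G x y"
    and row_sum: "\<And>x. x \<in> S \<Longrightarrow> (\<Sum>y\<in>S. G x y) = 1"
    and average: "(\<Sum>x\<in>S. \<Sum>y\<in>S. G x y * w x y) \<le> c * card S"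
  shows "\<exists>x\<in>S. \<exists>y\<in>S. G x y \<noteq> 0 \<and> w x y \<le> c"
proof (rule ccontr)
  assume contra: "\<not> ?thesis"
  have pos: "0 \<le> G x y * (w x y - c)" if "x \<in> S" "y \<in> S" for x y
  proof -
    have "G x y = 0 \<or> c < w x y"
      using contra that by (meson not_le)
    then show ?thesis
      using nonneg[OF that] by auto
  qed
  have "(\<Sum>x\<in>S. \<Sum>y\<in>S. G x y * (w x y - c)) = (\<Sum>x\<in>S. \<Sum>y\<in>S. G x y * w x y) - c * card S"
    by (simp add: right_diff_distrib sum_subtractf sum_distrib_right[symmetric] row_sum)
  also have "\<dots> \<le> 0"
    using average by simp
  finally have "(\<Sum>x\<in>S. \<Sum>y\<in>S. G x y * (w x y - c)) \<le> 0" .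
  moreover have "0 \<le> (\<Sum>x\<in>S. \<Sum>y\<in>S. G x y * (w x y - c))"
    using pos by (simp add: sum_nonneg)
  ultimately have "(\<Sum>x\<in>S. \<Sum>y\<in>S. G x y * (w x y - c)) = 0"
    by (rule antisym)
  then have zero: "G x y * (w x y - c) = 0" if "x \<in> S" "y \<in> S" for x y
    using that pos \<open>finite S\<close> by (simp add: sum_nonneg sum_nonneg_eq_0_iff)
  obtain y0 where "y0 \<in> S" "G x0 y0 \<noteq> 0"
    using row_sum[OF \<open>x0 \<in> S\<close>] by (metis (no_types, lifting) sum.neutral zero_neq_one)
  with zero[OF \<open>x0 \<in> S\<close>] contra \<open>x0 \<in> S\<close> show False
    by auto
qed

lemma sqrt_mult_le_weighted_mean:
  fixes a b r :: real
  assumes "0 \<le> a" "0 \<le> b" "0 < r"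
  shows "sqrt (a * b) \<le> (a * r + b / r) / 2"
  using arith_geo_mean_sqrt[of "a * r" "b / r"] assms by simp

definition block_transition ::
  "(bool list \<Rightarrow> bool) \<Rightarrow> (bool list \<Rightarrow> bool list \<Rightarrow> real) \<Rightarrow> bool list \<Rightarrow> bool list \<Rightarrow> real" where
  "block_transition g G s t = (if g s = g t then of_bool (s = t) else G s t)"

locale adversary_certificate =
  fixes N :: nat and g :: "bool list \<Rightarrow> bool"
    and G :: "bool list \<Rightarrow> bool list \<Rightarrow> real" and u :: "nat \<Rightarrow> bool list \<Rightarrow> real" and c :: real
  assumes nonneg: "x \<in> bitstrings N \<Longrightarrow> y \<in> bitstrings N \<Longrightarrow> 0 \<le> G x y"
    and symmetric: "x \<in> bitstrings N \<Longrightarrow> y \<in> bitstrings N \<Longrightarrow> G x y = G y x"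
    and separating: "x \<in> bitstrings N \<Longrightarrow> y \<in> bitstrings N \<Longrightarrow> G x y \<noteq> 0 \<Longrightarrow> g x \<noteq> g y"
    and row_sum: "x \<in> bitstrings N \<Longrightarrow> (\<Sum>y\<in>bitstrings N. G x y) = 1"
    and u_pos: "i < N \<Longrightarrow> x \<in> bitstrings N \<Longrightarrow> 0 < u i x"
    and u_bound: "i < N \<Longrightarrow> x \<in> bitstrings N \<Longrightarrow>
      (\<Sum>y\<in>bitstrings N. if x ! i \<noteq> y ! i then G x y * u i y else 0) \<le> c * u i x"
begin

lemma N_pos: "0 < N"
proof (rule ccontr)
  assume "\<not> 0 < N"
  then have "bitstrings N = {[]}"
    by (simp add: bitstrings_0)
  then show False
    using row_sum[of "[]"] separating[of "[]" "[]"] by simp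
qed

lemma c_nonneg: "0 \<le> c"
proof -
  let ?x = "replicate N False"
  have x: "?x \<in> bitstrings N"
    by (simp add: bitstrings_def)
  have "0 \<le> (\<Sum>y\<in>bitstrings N. if ?x ! 0 \<noteq> y ! 0 then G ?x y * u 0 y else 0)"
    using x N_pos by (auto intro!: sum_nonneg mult_nonneg_nonneg nonneg less_imp_le[OF u_pos])
  also have "\<dots> \<le> c * u 0 ?x"
    by (rule u_bound[OF N_pos x])
  finally show ?thesis
    using u_pos[OF N_pos x] by (simp add: zero_le_mult_iff)
qed

(* One half of the AM-GM bound on G x y * sqrt (p x i * p y i), taken with the ratio u i y / u i x. *)
definition flow :: "(bool list \<Rightarrow> nat \<Rightarrow> real) \<Rightarrow> bool list \<Rightarrow> bool list \<Rightarrow> nat \<Rightarrow> real" where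
  "flow p x y i = (if x ! i \<noteq> y ! i then G x y * (p x i * u i y / u i x) else 0)"

lemma pair_weight_le_flow:
  assumes p: "p \<in> prob_families N" and x: "x \<in> bitstrings N" and y: "y \<in> bitstrings N"
  shows "G x y * pair_weight N p x y \<le> (\<Sum>i<N. (flow p x y i + flow p y x i) / 2)"
  unfolding pair_weight_eq sum_distrib_left
proof (rule sum_mono)
  fix i assume "i \<in> {..<N}"
  then have i: "i < N" by simp
  let ?r = "u i y / u i x"
  have "sqrt (p x i * p y i) \<le> (p x i * ?r + p y i / ?r) / 2"
    using p x y i u_pos[OF i x] u_pos[OF i y]
    by (intro sqrt_mult_le_weighted_mean) (auto simp: prob_families_def)
  then have "G x y * sqrt (p x i * p y i) \<le> G x y * ((p x i * ?r + p y i / ?r) / 2)"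
    using nonneg[OF x y] by (rule mult_left_mono)
  also have "\<dots> = (G x y * (p x i * u i y / u i x) + G y x * (p y i * u i x / u i y)) / 2"
    using symmetric[OF x y] by (simp add: field_simps)
  finally show "G x y * (if x ! i \<noteq> y ! i then sqrt (p x i * p y i) else 0)
      \<le> (flow p x y i + flow p y x i) / 2"
    by (auto simp: flow_def)
qed

lemma sum_flow_le:
  assumes p: "p \<in> prob_families N"
  shows "(\<Sum>x\<in>bitstrings N. \<Sum>y\<in>bitstrings N. \<Sum>i<N. flow p x y i) \<le> c * card (bitstrings N)"
proof -
  let ?S = "bitstrings N"
  have p_nonneg: "0 \<le> p x i" if "x \<in> ?S" "i < N" for x i
    using p that by (simp add: prob_families_def)
  have "(\<Sum>x\<in>?S. \<Sum>y\<in>?S. \<Sum>i<N. flow p x y i)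
      = (\<Sum>x\<in>?S. \<Sum>i<N. p x i / u i x * (\<Sum>y\<in>?S. if x ! i \<noteq> y ! i then G x y * u i y else 0))"
    unfolding flow_def
    by (intro sum.cong refl, subst sum.swap) (auto simp: sum_distrib_left intro!: sum.cong)
  also have "\<dots> \<le> (\<Sum>x\<in>?S. \<Sum>i<N. p x i / u i x * (c * u i x))"
    using u_bound u_pos p_nonneg by (intro sum_mono mult_left_mono) (auto intro!: divide_nonneg_pos)
  also have "\<dots> = (\<Sum>x\<in>?S. c * (\<Sum>i<N. p x i))"
    by (auto simp: sum_distrib_left dest: u_pos intro!: sum.cong)
  also have "\<dots> = c * card ?S"
    using p by (simp add: prob_families_def)
  finally show ?thesis .
qed

lemma weighted_pair_weight_le:
  assumes p: "p \<in> prob_families N"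
  shows "(\<Sum>x\<in>bitstrings N. \<Sum>y\<in>bitstrings N. G x y * pair_weight N p x y) \<le> c * card (bitstrings N)"
proof -
  let ?S = "bitstrings N"
  have "(\<Sum>x\<in>?S. \<Sum>y\<in>?S. G x y * pair_weight N p x y)
      \<le> (\<Sum>x\<in>?S. \<Sum>y\<in>?S. \<Sum>i<N. (flow p x y i + flow p y x i) / 2)"
    using pair_weight_le_flow[OF p] by (intro sum_mono) auto
  also have "\<dots> = (\<Sum>x\<in>?S. \<Sum>y\<in>?S. \<Sum>i<N. flow p x y i) / 2
      + (\<Sum>x\<in>?S. \<Sum>y\<in>?S. \<Sum>i<N. flow p y x i) / 2"
    by (simp add: sum.distrib add_divide_distrib sum_divide_distrib)
  also have "\<dots> = (\<Sum>x\<in>?S. \<Sum>y\<in>?S. \<Sum>i<N. flow p x y i)"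
    by (subst (2) sum.swap) simp
  finally show ?thesis
    using sum_flow_le[OF p] by linarith
qed

lemma ex_pair_weight_le:
  assumes "p \<in> prob_families N"
  shows "\<exists>x\<in>bitstrings N. \<exists>y\<in>bitstrings N. g x \<noteq> g y \<and> pair_weight N p x y \<le> c"
proof -
  have "replicate N False \<in> bitstrings N"
    by (simp add: bitstrings_def)
  then obtain x y where "x \<in> bitstrings N" "y \<in> bitstrings N" "G x y \<noteq> 0" "pair_weight N p x y \<le> c"
    using stochastic_average_le_imp_ex[OF finite_bitstrings _ nonneg row_sum weighted_pair_weight_le[OF assms]]
    by blast
  then show ?thesis
    using separating by blast
qed

lemma inverse_le_sumPI:
  assumes "0 < c"
  shows "ereal (1 / c) \<le> sumPI N g"
  unfolding sumPI_def
proof (rule INF_greatest)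
  fix p assume p: "p \<in> prob_families N"
  then obtain x y where xy: "x \<in> bitstrings N" "y \<in> bitstrings N" "g x \<noteq> g y"
    and le: "pair_weight N p x y \<le> c"
    using ex_pair_weight_le by blast
  have "ereal (1 / c) \<le> inv_weight (pair_weight N p x y)"
    using pair_weight_nonneg[OF p xy(1,2)] le \<open>0 < c\<close>
    by (auto simp: inv_weight_def frac_le)
  also have "\<dots> \<le> sumPI_obj N g p"
    unfolding sumPI_obj_def using xy by (intro SUP_upper2[where i = "(x, y)"]) auto
  finally show "ereal (1 / c) \<le> sumPI_obj N g p" .
qed

lemma sum_other_value_eq:
  assumes "s \<in> bitstrings N" "v \<noteq> g s"
  shows "(\<Sum>t | t \<in> bitstrings N \<and> g t = v. G s t * E t) = (\<Sum>t\<in>bitstrings N. G s t * E t)"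
  using assms separating[of s] by (intro sum.mono_neutral_left) (auto simp: finite_bitstrings)

lemma sum_block_transition:
  assumes s: "s \<in> bitstrings N"
  shows "(\<Sum>t | t \<in> bitstrings N \<and> g t = v. block_transition g G s t) = 1"
proof (cases "v = g s")
  case True
  then have "(\<Sum>t | t \<in> bitstrings N \<and> g t = v. block_transition g G s t)
      = (\<Sum>t | t \<in> bitstrings N \<and> g t = v. of_bool (s = t))"
    by (intro sum.cong) (auto simp: block_transition_def)
  with True s show ?thesis
    by (simp add: finite_bitstrings)
next
  case False
  then have "(\<Sum>t | t \<in> bitstrings N \<and> g t = v. block_transition g G s t)
      = (\<Sum>t | t \<in> bitstrings N \<and> g t = v. G s t * 1)"
    by (intro sum.cong) (auto simp: block_transition_def)
  also have "\<dots> = 1"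
    using sum_other_value_eq[OF s False, of "\<lambda>_. 1"] row_sum[OF s] by simp
  finally show ?thesis .
qed

lemma sum_block_transition_u_le:
  assumes s: "s \<in> bitstrings N" and i: "i < N"
  shows "(\<Sum>t | t \<in> bitstrings N \<and> g t = v.
            block_transition g G s t * (if s ! i \<noteq> t ! i then u i t else 0))
    \<le> (if v \<noteq> g s then c * u i s else 0)"
proof (cases "v = g s")
  case True
  then show ?thesis
    by (auto simp: block_transition_def of_bool_def intro!: sum_nonpos)
next
  case False
  then have "(\<Sum>t | t \<in> bitstrings N \<and> g t = v.
            block_transition g G s t * (if s ! i \<noteq> t ! i then u i t else 0))
      = (\<Sum>t | t \<in> bitstrings N \<and> g t = v. G s t * (if s ! i \<noteq> t ! i then u i t else 0))"
    by (intro sum.cong) (auto simp: block_transition_def)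
  also have "\<dots> = (\<Sum>t\<in>bitstrings N. G s t * (if s ! i \<noteq> t ! i then u i t else 0))"
    by (rule sum_other_value_eq[OF s False])
  also have "\<dots> = (\<Sum>t\<in>bitstrings N. if s ! i \<noteq> t ! i then G s t * u i t else 0)"
    by (intro sum.cong) auto
  also have "\<dots> \<le> c * u i s"
    using i s by (rule u_bound)
  finally show ?thesis
    using False by simp
qed

end

definition compose_matrix :: "nat \<Rightarrow> nat \<Rightarrow> (bool list \<Rightarrow> bool) \<Rightarrow> (bool list \<Rightarrow> bool list \<Rightarrow> real) \<Rightarrow>
    (bool list \<Rightarrow> bool list \<Rightarrow> real) \<Rightarrow> bool list \<Rightarrow> bool list \<Rightarrow> real" where
  "compose_matrix n N g GA GB x y = GA (block_values n N g x) (block_values n N g y) *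
     (\<Prod>k<n. block_transition g GB (block N k x) (block N k y))"

definition compose_vector :: "nat \<Rightarrow> nat \<Rightarrow> (bool list \<Rightarrow> bool) \<Rightarrow> (nat \<Rightarrow> bool list \<Rightarrow> real) \<Rightarrow>
    (nat \<Rightarrow> bool list \<Rightarrow> real) \<Rightarrow> nat \<Rightarrow> bool list \<Rightarrow> real" where
  "compose_vector n N g uA uB i x =
     uA (i div N) (block_values n N g x) * uB (i mod N) (block N (i div N) x)"

locale certificate_composition =
  outer: adversary_certificate n f GA uA cA + inner: adversary_certificate N g GB uB cB
  for n f GA uA cA N g GB uB cB
begin

abbreviation "S \<equiv> bitstrings (n * N)"
abbreviation "GG \<equiv> compose_matrix n N g GA GB"
abbreviation "UU \<equiv> compose_vector n N g uA uB"

lemma compose_row_sum: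
  assumes x: "x \<in> S"
  shows "(\<Sum>y\<in>S. GG x y) = 1"
proof -
  have "(\<Sum>y\<in>S. GG x y) = (\<Sum>y\<in>S. GA (block_values n N g x) (block_values n N g y) *
      (\<Prod>k<n. block_transition g GB (block N k x) (block N k y)))"
    by (simp add: compose_matrix_def)
  also have "\<dots> = (\<Sum>w\<in>bitstrings n. GA (block_values n N g x) w *
      (\<Prod>k<n. \<Sum>t | t \<in> bitstrings N \<and> g t = w ! k. block_transition g GB (block N k x) t))"
    by (rule sum_bitstrings_blocks)
  also have "\<dots> = (\<Sum>w\<in>bitstrings n. GA (block_values n N g x) w)"
    using x by (simp add: inner.sum_block_transition block_in_bitstrings)
  also have "\<dots> = 1"
    by (simp add: outer.row_sum block_values_in_bitstrings)
  finally show ?thesis .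
qed

lemma compose_u_sum_eq:
  assumes j: "j < n" and i0: "i0 < N" and x: "x \<in> S"
  defines "s \<equiv> block N j x"
  shows "(\<Sum>y\<in>S. if x ! (j * N + i0) \<noteq> y ! (j * N + i0) then GG x y * UU (j * N + i0) y else 0)
    = (\<Sum>w\<in>bitstrings n. GA (block_values n N g x) w * uA j w *
        (\<Sum>t | t \<in> bitstrings N \<and> g t = w ! j.
          block_transition g GB s t * (if s ! i0 \<noteq> t ! i0 then uB i0 t else 0)))"
proof -
  define H where "H w = GA (block_values n N g x) w * uA j w" for w
  define K where "K k t = block_transition g GB (block N k x) t *
    (if k = j then (if s ! i0 \<noteq> t ! i0 then uB i0 t else 0) else 1)" for k t
  have "(\<Sum>y\<in>S. if x ! (j * N + i0) \<noteq> y ! (j * N + i0) then GG x y * UU (j * N + i0) y else 0)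
      = (\<Sum>y\<in>S. H (block_values n N g y) * (\<Prod>k<n. K k (block N k y)))"
  proof (rule sum.cong[OF refl])
    fix y assume y: "y \<in> S"
    have "(\<Prod>k<n. K k (block N k y)) = (\<Prod>k<n. block_transition g GB (block N k x) (block N k y)) *
        (if s ! i0 \<noteq> block N j y ! i0 then uB i0 (block N j y) else 0)"
      using j by (simp add: K_def prod.distrib)
    then show "(if x ! (j * N + i0) \<noteq> y ! (j * N + i0) then GG x y * UU (j * N + i0) y else 0)
        = H (block_values n N g y) * (\<Prod>k<n. K k (block N k y))"
      using x y j i0 by (simp add: H_def compose_matrix_def compose_vector_def s_def nth_block)
  qed
  also have "\<dots> = (\<Sum>w\<in>bitstrings n. H w * (\<Prod>k<n. \<Sum>t | t \<in> bitstrings N \<and> g t = w ! k. K k t))"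
    by (rule sum_bitstrings_blocks)
  also have "\<dots> = (\<Sum>w\<in>bitstrings n. H w * (\<Sum>t | t \<in> bitstrings N \<and> g t = w ! j. K j t))"
  proof (rule sum.cong[OF refl])
    fix w
    have "(\<Prod>k<n. \<Sum>t | t \<in> bitstrings N \<and> g t = w ! k. K k t)
        = (\<Prod>k<n. if k = j then (\<Sum>t | t \<in> bitstrings N \<and> g t = w ! j. K j t) else 1)"
      using x by (intro prod.cong) (simp_all add: K_def inner.sum_block_transition block_in_bitstrings)
    then show "H w * (\<Prod>k<n. \<Sum>t | t \<in> bitstrings N \<and> g t = w ! k. K k t)
        = H w * (\<Sum>t | t \<in> bitstrings N \<and> g t = w ! j. K j t)"
      using j by simp
  qed
  finally show ?thesis
    by (simp add: H_def K_def s_def)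
qed

lemma compose_u_bound:
  assumes i: "i < n * N" and x: "x \<in> S"
  shows "(\<Sum>y\<in>S. if x ! i \<noteq> y ! i then GG x y * UU i y else 0) \<le> cA * cB * UU i x"
proof -
  define j i0 where "j = i div N" and "i0 = i mod N"
  have j: "j < n" and i0: "i0 < N" and i_eq: "i = j * N + i0"
    using i inner.N_pos by (simp_all add: j_def i0_def less_mult_imp_div_less)
  define z s where "z = block_values n N g x" and "s = block N j x"
  have z: "z \<in> bitstrings n" and s: "s \<in> bitstrings N"
    using x j by (simp_all add: z_def s_def block_values_in_bitstrings block_in_bitstrings)
  have "(\<Sum>y\<in>S. if x ! i \<noteq> y ! i then GG x y * UU i y else 0)
      = (\<Sum>w\<in>bitstrings n. GA z w * uA j w * (\<Sum>t | t \<in> bitstrings N \<and> g t = w ! j.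
          block_transition g GB s t * (if s ! i0 \<noteq> t ! i0 then uB i0 t else 0)))"
    unfolding i_eq z_def s_def by (rule compose_u_sum_eq[OF j i0 x])
  also have "\<dots> \<le> (\<Sum>w\<in>bitstrings n. GA z w * uA j w * (if w ! j \<noteq> g s then cB * uB i0 s else 0))"
    using z j inner.sum_block_transition_u_le[OF s i0]
    by (intro sum_mono mult_left_mono) (simp_all add: outer.nonneg less_imp_le[OF outer.u_pos])
  also have "\<dots> = cB * uB i0 s * (\<Sum>w\<in>bitstrings n. if z ! j \<noteq> w ! j then GA z w * uA j w else 0)"
    using j by (auto simp: z_def s_def nth_block_values sum_distrib_left intro!: sum.cong)
  also have "\<dots> \<le> cB * uB i0 s * (cA * uA j z)"
    using inner.c_nonneg inner.u_pos[OF i0 s] outer.u_bound[OF j z] by (simp add: mult_left_mono)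
  also have "\<dots> = cA * cB * UU i x"
    by (simp add: compose_vector_def z_def s_def j_def i0_def)
  finally show ?thesis .
qed

lemma adversary_certificate_compose:
  "adversary_certificate (n * N) (compose n N f g) GG UU (cA * cB)"
proof
  fix x y assume x: "x \<in> S" and y: "y \<in> S"
  have blocks: "block N k x \<in> bitstrings N" "block N k y \<in> bitstrings N" if "k < n" for k
    using x y that by (simp_all add: block_in_bitstrings)
  show "0 \<le> GG x y"
    using blocks by (auto simp: compose_matrix_def block_transition_def block_values_in_bitstrings
        outer.nonneg inner.nonneg intro!: mult_nonneg_nonneg prod_nonneg)
  show "GG x y = GG y x"
    using blocks by (auto simp: compose_matrix_def block_transition_def block_values_in_bitstrings
        outer.symmetric inner.symmetric intro!: prod.cong)
  show "GG x y \<noteq> 0 \<Longrightarrow> compose n N f g x \<noteq> compose n N f g y"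
    using outer.separating[OF block_values_in_bitstrings block_values_in_bitstrings]
    by (auto simp: compose_matrix_def compose_def)
next
  fix i x assume i: "i < n * N" and x: "x \<in> S"
  then have "i div N < n" "i mod N < N"
    using inner.N_pos by (simp_all add: less_mult_imp_div_less)
  with x show "0 < UU i x"
    by (simp add: compose_vector_def outer.u_pos inner.u_pos block_values_in_bitstrings block_in_bitstrings)
qed (rule compose_row_sum compose_u_bound; assumption)+

end

section \<open>Iterated composition\<close>

lemma bitstrings_Suc_0: "bitstrings (Suc 0) = {[False], [True]}"
  by (auto simp: bitstrings_def length_Suc_conv)

lemma separating_weights_hd: "separating_weights 1 hd (\<lambda>_ _. 1) 1"
  by (auto simp: separating_weights_def prob_families_def bitstrings_Suc_0 pair_weight_eq)

lemma adversary_certificate_hd: "adversary_certificate 1 hd (\<lambda>x y. of_bool (hd x \<noteq> hd y)) (\<lambda>_ _. 1) 1"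
  by unfold_locales (auto simp: bitstrings_Suc_0)

lemma ex_iter_weights_and_certificate:
  assumes "separating_weights n f p a" and "adversary_certificate n f G u a"
  shows "\<exists>p' G' u'. separating_weights (n ^ d) (iter n d f) p' (a ^ d) \<and>
    adversary_certificate (n ^ d) (iter n d f) G' u' (a ^ d)"
proof (induction d)
  case 0
  show ?case
    using separating_weights_hd adversary_certificate_hd by auto
next
  case (Suc d)
  then obtain p' G' u' where p': "separating_weights (n ^ d) (iter n d f) p' (a ^ d)"
    and G': "adversary_certificate (n ^ d) (iter n d f) G' u' (a ^ d)"
    by blast
  interpret certificate_composition n f G u a "n ^ d" "iter n d f" G' u' "a ^ d"
    using assms(2) G' by (simp add: certificate_composition_def)
  have "separating_weights (n * n ^ d) (compose n (n ^ d) f (iter n d f))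
      (compose_weights n (n ^ d) (iter n d f) p p') (a * a ^ d)"
    using separating_weights_compose[OF assms(1) p' inner.N_pos inner.c_nonneg] .
  with adversary_certificate_compose show ?case
    by (auto simp: iter_Suc_eq_compose)
qed

theorem sumPI_iter:
  assumes "separating_weights n f p a" and "adversary_certificate n f G u a" and "0 < a"
  shows "sumPI (n ^ d) (iter n d f) = ereal ((1 / a) ^ d)"
proof -
  obtain p' G' u' where p': "separating_weights (n ^ d) (iter n d f) p' (a ^ d)"
    and G': "adversary_certificate (n ^ d) (iter n d f) G' u' (a ^ d)"
    using ex_iter_weights_and_certificate[OF assms(1,2)] by blast
  show ?thesis
    using sumPI_le_inverse[OF p'] adversary_certificate.inverse_le_sumPI[OF G'] \<open>0 < a\<close>
    by (simp add: power_one_over antisym)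
qed

section \<open>The function A\<close>

(* Weighted edges of the certificate matrix (scaled by 10), with 4-bit strings written as
   binary numerals, first bit most significant, as decoded by bin_val. *)
definition edges_A :: "(nat \<times> nat \<times> nat) list" where
  "edges_A =
    [(0b0000, 0b0010, 3), (0b0000, 0b0100, 3), (0b0000, 0b0110, 2), (0b0000, 0b1001, 2),
     (0b0001, 0b0010, 2), (0b0001, 0b0101, 3), (0b0001, 0b1001, 3), (0b0001, 0b1101, 2),
     (0b0010, 0b0011, 3), (0b0010, 0b1110, 2), (0b0011, 0b0101, 2), (0b0011, 0b1010, 2),
     (0b0011, 0b1011, 3), (0b0100, 0b0111, 2), (0b0100, 0b1000, 2), (0b0100, 0b1100, 3),
     (0b0101, 0b0111, 3), (0b0101, 0b1100, 2), (0b0110, 0b0111, 3), (0b0110, 0b1110, 3),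
     (0b0110, 0b1111, 2), (0b0111, 0b1011, 2), (0b1000, 0b1001, 3), (0b1000, 0b1010, 3),
     (0b1000, 0b1011, 2), (0b1001, 0b1111, 2), (0b1010, 0b1100, 2), (0b1010, 0b1110, 3),
     (0b1011, 0b1111, 3), (0b1100, 0b1101, 3), (0b1101, 0b1110, 2), (0b1101, 0b1111, 3)]"

definition bin_val :: "bool list \<Rightarrow> nat" where
  "bin_val = foldl (\<lambda>k b. 2 * k + of_bool b) 0"

definition weight_A :: "bool list \<Rightarrow> bool list \<Rightarrow> nat" where
  "weight_A x y = sum_list [w. (a, b, w) \<leftarrow> edges_A, {a, b} = {bin_val x, bin_val y}]"

definition q_A :: "bool list \<Rightarrow> nat \<Rightarrow> nat" where
  "q_A x i = [[1, 2, 2, 1], [2, 2, 1, 1], [1, 1, 2, 2], [2, 1, 1, 2]]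
     ! (2 * of_bool (x ! 0 \<noteq> x ! 2) + of_bool (x ! 1 \<noteq> x ! 3)) ! i"

lemma bitstrings_4: "bitstrings 4 = set (List.n_lists 4 [False, True])"
  by (auto simp: bitstrings_def set_n_lists)

lemma sum_bitstrings_4: "(\<Sum>y\<in>bitstrings 4. F y) = (\<Sum>y\<leftarrow>List.n_lists 4 [False, True]. F y)"
proof -
  have "distinct (List.n_lists 4 [False, True])"
    by code_simp
  then show ?thesis
    by (simp add: bitstrings_4 sum_list_distinct_conv_sum_set)
qed

lemma weight_A_sym: "weight_A x y = weight_A y x"
  by (simp add: weight_A_def insert_commute)

lemma weight_A_separating:
  "\<forall>x\<in>bitstrings 4. \<forall>y\<in>bitstrings 4. weight_A x y \<noteq> 0 \<longrightarrow> funA x \<noteq> funA y"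
  unfolding bitstrings_4 by code_simp

lemma weight_A_row_sum: "\<forall>x\<in>bitstrings 4. (\<Sum>y\<in>bitstrings 4. weight_A x y) = 10"
  unfolding sum_bitstrings_4 bitstrings_4 by code_simp

lemma q_A_subeigen: "\<forall>x\<in>bitstrings 4. \<forall>i\<in>{..<4}.
    (\<Sum>y\<in>bitstrings 4. if x ! i \<noteq> y ! i then weight_A x y * q_A y i else 0) \<le> 4 * q_A x i"
  unfolding sum_bitstrings_4 bitstrings_4 lessThan_atLeast0 atLeastLessThan_upt by code_simp

lemma q_A_separating: "\<forall>x\<in>bitstrings 4. \<forall>y\<in>bitstrings 4. funA x \<noteq> funA y \<longrightarrow>
    4 \<le> (\<Sum>i<4. if x ! i \<noteq> y ! i then q_A x i * q_A y i else 0)"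
  unfolding bitstrings_4 by code_simp

lemma sum_q_A_square: "(\<Sum>i<4. q_A x i ^ 2) = 10"
  by (simp add: q_A_def numeral_eq_Suc lessThan_Suc)

lemma q_A_pos: "i < 4 \<Longrightarrow> 0 < q_A x i"
  by (auto simp: q_A_def numeral_eq_Suc less_Suc_eq nth_Cons split: nat.split)

definition weights_A :: "bool list \<Rightarrow> nat \<Rightarrow> real" where
  "weights_A x i = q_A x i ^ 2 / 10"

lemma pair_weight_weights_A:
  "pair_weight 4 weights_A x y = real (\<Sum>i<4. if x ! i \<noteq> y ! i then q_A x i * q_A y i else 0) / 10"
proof -
  have "sqrt (weights_A x i * weights_A y i) = real (q_A x i * q_A y i) / 10" for i
    by (simp add: weights_A_def power_mult_distrib[symmetric] real_sqrt_divide)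
  then show ?thesis
    unfolding pair_weight_eq of_nat_sum sum_divide_distrib by (intro sum.cong) simp_all
qed

lemma separating_weights_A: "separating_weights 4 funA weights_A (2 / 5)"
  unfolding separating_weights_def prob_families_def
proof (intro conjI CollectI ballI allI impI)
  fix x y assume "x \<in> bitstrings 4" "y \<in> bitstrings 4" "funA x \<noteq> funA y"
  then have "4 \<le> (\<Sum>i<4. if x ! i \<noteq> y ! i then q_A x i * q_A y i else 0)"
    using q_A_separating by blast
  then have "4 \<le> real (\<Sum>i<4. if x ! i \<noteq> y ! i then q_A x i * q_A y i else 0)"
    by (metis of_nat_le_iff of_nat_numeral)
  then show "2 / 5 \<le> pair_weight 4 weights_A x y"
    unfolding pair_weight_weights_A by linarith
next
  fix x
  have "real (\<Sum>i<4. q_A x i ^ 2) = 10"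
    by (simp only: sum_q_A_square of_nat_numeral)
  then show "(\<Sum>i<4. weights_A x i) = 1"
    by (simp add: weights_A_def flip: sum_divide_distrib)
qed (simp add: weights_A_def)

lemma adversary_certificate_A:
  "adversary_certificate 4 funA (\<lambda>x y. weight_A x y / 10) (\<lambda>i x. q_A x i) (2 / 5)"
proof
  fix x y assume "x \<in> bitstrings 4" "y \<in> bitstrings 4"
  then show "weight_A x y / 10 \<noteq> 0 \<Longrightarrow> funA x \<noteq> funA y"
    using weight_A_separating by simp
next
  fix x assume "x \<in> bitstrings 4"
  then have "real (\<Sum>y\<in>bitstrings 4. weight_A x y) = 10"
    using weight_A_row_sum by simp
  then show "(\<Sum>y\<in>bitstrings 4. weight_A x y / 10) = 1"
    by (simp add: flip: sum_divide_distrib)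
next
  fix i x assume "i < (4 :: nat)" "x \<in> bitstrings 4"
  then have "real (\<Sum>y\<in>bitstrings 4. if x ! i \<noteq> y ! i then weight_A x y * q_A y i else 0)
      \<le> real (4 * q_A x i)"
    using q_A_subeigen by (simp only: of_nat_le_iff lessThan_iff)
  moreover have "(\<Sum>y\<in>bitstrings 4. if x ! i \<noteq> y ! i then weight_A x y / 10 * q_A y i else 0)
      = real (\<Sum>y\<in>bitstrings 4. if x ! i \<noteq> y ! i then weight_A x y * q_A y i else 0) / 10"
    unfolding of_nat_sum sum_divide_distrib by (intro sum.cong) auto
  ultimately show "(\<Sum>y\<in>bitstrings 4. if x ! i \<noteq> y ! i then weight_A x y / 10 * q_A y i else 0)
      \<le> 2 / 5 * q_A x i"
    by simp
qed (simp_all add: weight_A_sym q_A_pos)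

theorem mainTheorem16:
  fixes d :: nat
  assumes "d \<ge> 1"
  shows "sumPI (4 ^ d) (iter 4 d funA) = ereal ((5 / 2) ^ d)"
  using sumPI_iter[OF separating_weights_A adversary_certificate_A] by simp

end
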